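(* An instance of the UDODOSP is feasible if and only if there are integers $W^d$ for $0\le d\le D$ with $W^D-W^0\le N U_w$; $\;N D+W^0-W^D\le N U_o$; $\;W^{d+u_w}-W^{d-1}\le N u_w$ for all $1\le d\le D-u_w$; $\;N\le W^{d+u_o}-W^{d-1}$ for all $1\le d\le D-u_o$; and $\;r_l^d\le W^d-W^{d-1}\le r_u^d$ for all $1\le d\le D$.
   Context: An instance of the Days On Days Off Scheduling Problem (DODOSP) consists of integers $D\ge 1$ (days), $N\ge 1$ (workers), bounds $l_w,u_w,l_o,u_o,U_w,U_o\in\mathbb{N}$, and for each day $d\in\{1,\dots,D\}$ integers $0\le r_l^d\le r_u^d\le N$. A schedule is a map $f:\{n_1,\dots,n_N\}\times\{1,\dots,D\}\to\{\mathrm{ON},\mathrm{OFF}\}$ (not cyclic). A work period (resp. off period) of a worker is an inclusion-wise maximal set of consecutive days on which the worker is ON (resp. OFF). A schedule is feasible if on every day $d$ the number of workers that are ON lies in $[r_l^d,r_u^d]$, every work period has length between $l_w$ and $u_w$, every off period has length between $l_o$ and $u_o$, every worker is ON on at most $U_w$ days and OFF on at most $U_o$ days. An instance is feasible if a feasible schedule exists. The UDODOSP is the DODOSP restricted to instances with $l_w=l_o=1$. *)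

theory Defs
  imports Main
begin

text \<open>A schedule: workers are indexed 0..N-1 (standing for n_1..n_N), days are 1..D.
  s i d = True means worker i is ON on day d, False means OFF.
  Only values with i < N and 1 \<le> d \<le> D are relevant.\<close>

type_synonym schedule = "nat \<Rightarrow> nat \<Rightarrow> bool"

definition is_period :: "nat \<Rightarrow> schedule \<Rightarrow> nat \<Rightarrow> bool \<Rightarrow> nat \<Rightarrow> nat \<Rightarrow> bool" where
  "is_period D s i v a b \<longleftrightarrow>
     1 \<le> a \<and> a \<le> b \<and> b \<le> D \<and>
     (\<forall>d\<in>{a..b}. s i d = v) \<and>
     (a = 1 \<or> s i (a - 1) \<noteq> v) \<and>
     (b = D \<or> s i (b + 1) \<noteq> v)"

definition feasible_schedule ::
  "nat \<Rightarrow> nat \<Rightarrow> nat \<Rightarrow> nat \<Rightarrow> nat \<Rightarrow> nat \<Rightarrow> nat \<Rightarrow> nat \<Rightarrow>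
   (nat \<Rightarrow> nat) \<Rightarrow> (nat \<Rightarrow> nat) \<Rightarrow> schedule \<Rightarrow> bool" where
  "feasible_schedule D N lw uw lo uo Uw Uo rl ru s \<longleftrightarrow>
     (\<forall>d\<in>{1..D}. rl d \<le> card {i. i < N \<and> s i d} \<and> card {i. i < N \<and> s i d} \<le> ru d) \<and>
     (\<forall>i<N. \<forall>a b. is_period D s i True a b \<longrightarrow> lw \<le> b + 1 - a \<and> b + 1 - a \<le> uw) \<and>
     (\<forall>i<N. \<forall>a b. is_period D s i False a b \<longrightarrow> lo \<le> b + 1 - a \<and> b + 1 - a \<le> uo) \<and>
     (\<forall>i<N. card {d\<in>{1..D}. s i d} \<le> Uw) \<and>
     (\<forall>i<N. card {d\<in>{1..D}. \<not> s i d} \<le> Uo)"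

definition dodosp_feasible ::
  "nat \<Rightarrow> nat \<Rightarrow> nat \<Rightarrow> nat \<Rightarrow> nat \<Rightarrow> nat \<Rightarrow> nat \<Rightarrow> nat \<Rightarrow>
   (nat \<Rightarrow> nat) \<Rightarrow> (nat \<Rightarrow> nat) \<Rightarrow> bool" where
  "dodosp_feasible D N lw uw lo uo Uw Uo rl ru \<longleftrightarrow>
     (\<exists>s. feasible_schedule D N lw uw lo uo Uw Uo rl ru s)"

end

theory Submission
  imports Defs
begin

text \<open>
  Take \<open>W d\<close> to be the cumulative number of worker-days worked up to day \<open>d\<close>. For a feasible
  schedule every inequality is a sum over the workers of a per-worker bound: a window of
  \<open>uw + 1\<close> days contains an off day, a window of \<open>uo + 1\<close> days contains a work day, and a
  worker works between \<open>D - Uo\<close> and \<open>Uw\<close> days in total.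

  Conversely, split \<open>W d\<close> into the \<open>N\<close> shares \<open>\<lfloor>(W d + i) / N\<rfloor>\<close>, which sum to \<open>W d\<close> by
  Hermite's identity, and let worker \<open>i\<close> work on day \<open>d\<close> iff its share increases. As
  \<open>0 \<le> W d - W (d - 1) \<le> N\<close>, every share increases by 0 or 1 per day, and if \<open>W\<close> grows
  by at most (at least) \<open>N k\<close> over a window then every share grows by at most (at least)
  \<open>k\<close>. This turns each aggregate inequality into the corresponding constraint for every
  single worker.
\<close>

definition workload_conditions ::
  "nat \<Rightarrow> nat \<Rightarrow> nat \<Rightarrow> nat \<Rightarrow> nat \<Rightarrow> nat \<Rightarrow> (nat \<Rightarrow> nat) \<Rightarrow> (nat \<Rightarrow> nat) \<Rightarrow>
   (nat \<Rightarrow> int) \<Rightarrow> bool" where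
  "workload_conditions D N uw uo Uw Uo rl ru W \<longleftrightarrow>
     W D - W 0 \<le> int N * int Uw \<and>
     int N * int D + W 0 - W D \<le> int N * int Uo \<and>
     (\<forall>d. 1 \<le> d \<and> d + uw \<le> D \<longrightarrow> W (d + uw) - W (d - 1) \<le> int N * int uw) \<and>
     (\<forall>d. 1 \<le> d \<and> d + uo \<le> D \<longrightarrow> int N \<le> W (d + uo) - W (d - 1)) \<and>
     (\<forall>d. 1 \<le> d \<and> d \<le> D \<longrightarrow> int (rl d) \<le> W d - W (d - 1) \<and> W d - W (d - 1) \<le> int (ru d))"

lemma sum_telescope_atLeastAtMost:
  fixes f :: "nat \<Rightarrow> 'a::ab_group_add"
  assumes "1 \<le> a" "a \<le> b + 1"
  shows "(\<Sum>e\<in>{a..b}. f e - f (e - 1)) = f b - f (a - 1)"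
  using sum_telescope''[of "a - 1" b f] assms by simp

lemma card_filter_not:
  assumes "finite A"
  shows "card {x\<in>A. \<not> P x} = card A - card {x\<in>A. P x}"
proof -
  have "{x\<in>A. \<not> P x} = A - {x\<in>A. P x}" by blast
  then show ?thesis using assms by (simp add: card_Diff_subset)
qed

lemma constant_run_within_period:
  fixes s :: schedule
  assumes "1 \<le> a" "a \<le> b" "b \<le> D" "\<forall>e\<in>{a..b}. s i e = v"
  shows "\<exists>a' b'. is_period D s i v a' b' \<and> a' \<le> a \<and> b \<le> b'"
proof -
  define L where "L a' \<longleftrightarrow> 1 \<le> a' \<and> (\<forall>e\<in>{a'..b}. s i e = v)" for a'
  define R where "R b' \<longleftrightarrow> b' \<le> D \<and> (\<forall>e\<in>{a..b'}. s i e = v)" for b'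
  define a' where "a' = (LEAST a'. L a')"
  define b' where "b' = (GREATEST b'. R b')"
  have "L a" using assms unfolding L_def by auto
  then have La': "L a'" and "a' \<le> a" unfolding a'_def by (auto intro: LeastI Least_le)
  have "R b" using assms unfolding R_def by auto
  moreover have R_bounded: "y \<le> D" if "R y" for y using that unfolding R_def by auto
  ultimately have Rb': "R b'" and "b \<le> b'" unfolding b'_def by (auto intro: GreatestI_nat Greatest_le_nat)
  have left: "a' = 1 \<or> s i (a' - 1) \<noteq> v"
  proof (rule ccontr)
    assume extends: "\<not> ?thesis"
    have "s i e = v" if "e \<in> {a' - 1..b}" for e
    proof -
      have "e = a' - 1 \<or> e \<in> {a'..b}" using that by auto
      then show ?thesis using La' extends unfolding L_def by auto
    qed
    then have "L (a' - 1)" using extends La' unfolding L_def by auto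
    then have "a' \<le> a' - 1" unfolding a'_def by (rule Least_le)
    then show False using La' unfolding L_def by auto
  qed
  have right: "b' = D \<or> s i (b' + 1) \<noteq> v"
  proof (rule ccontr)
    assume "\<not> ?thesis"
    then have "R (b' + 1)" using Rb' unfolding R_def by (auto simp: le_Suc_eq)
    then have "b' + 1 \<le> b'" unfolding b'_def using R_bounded by (rule Greatest_le_nat)
    then show False by simp
  qed
  have "\<forall>e\<in>{a'..b'}. s i e = v"
  proof
    fix e assume "e \<in> {a'..b'}"
    then show "s i e = v" using La' Rb' \<open>a \<le> b\<close> unfolding L_def R_def by (cases "e \<le> b") auto
  qed
  moreover have "1 \<le> a'" "a' \<le> b'" "b' \<le> D"
    using La' Rb' \<open>a' \<le> a\<close> \<open>a \<le> b\<close> \<open>b \<le> b'\<close> unfolding L_def R_def by simp_all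
  ultimately have "is_period D s i v a' b'"
    using left right unfolding is_period_def by blast
  then show ?thesis using \<open>a' \<le> a\<close> \<open>b \<le> b'\<close> by blast
qed

lemma card_work_days_window_le:
  fixes s :: schedule
  assumes work_periods: "\<And>a b. is_period D s i True a b \<Longrightarrow> b + 1 - a \<le> uw"
    and "1 \<le> d" "d + uw \<le> D"
  shows "card {e\<in>{d..d + uw}. s i e} \<le> uw"
proof (cases "\<forall>e\<in>{d..d + uw}. s i e")
  case True
  then obtain a b where "is_period D s i True a b" "a \<le> d" "d + uw \<le> b"
    using constant_run_within_period[of d "d + uw" D s i True] assms(2,3) by auto
  then show ?thesis using work_periods by fastforce
next
  case False
  then obtain e where e: "e \<in> {d..d + uw}" "\<not> s i e" by auto
  then have "card {e\<in>{d..d + uw}. s i e} \<le> card ({d..d + uw} - {e})"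
    by (intro card_mono) auto
  also have "\<dots> = uw" using e by simp
  finally show ?thesis .
qed

lemma card_work_days_window_pos:
  fixes s :: schedule
  assumes off_periods: "\<And>a b. is_period D s i False a b \<Longrightarrow> b + 1 - a \<le> uo"
    and "1 \<le> d" "d + uo \<le> D"
  shows "0 < card {e\<in>{d..d + uo}. s i e}"
proof (cases "\<forall>e\<in>{d..d + uo}. \<not> s i e")
  case True
  then obtain a b where "is_period D s i False a b" "a \<le> d" "d + uo \<le> b"
    using constant_run_within_period[of d "d + uo" D s i False] assms(2,3) by auto
  then show ?thesis using off_periods by fastforce
next
  case False
  then show ?thesis by (auto simp: card_gt_0_iff)
qed

definition cumulative_workload :: "nat \<Rightarrow> schedule \<Rightarrow> nat \<Rightarrow> int" where
  "cumulative_workload N s d = (\<Sum>e\<in>{1..d}. int (card {i. i < N \<and> s i e}))"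

lemma cumulative_workload_step:
  assumes "1 \<le> d"
  shows "cumulative_workload N s d - cumulative_workload N s (d - 1) = int (card {i. i < N \<and> s i d})"
  using assms unfolding cumulative_workload_def by (cases d) simp_all

lemma cumulative_workload_diff:
  assumes "1 \<le> a" "a \<le> b + 1"
  shows "cumulative_workload N s b - cumulative_workload N s (a - 1) =
    (\<Sum>i<N. int (card {e\<in>{a..b}. s i e}))"
proof -
  let ?W = "cumulative_workload N s"
  have step: "?W e - ?W (e - 1) = int (card {i. i < N \<and> s i e})" if "e \<in> {a..b}" for e
    by (rule cumulative_workload_step) (use that assms(1) in auto)
  have "?W b - ?W (a - 1) = (\<Sum>e\<in>{a..b}. ?W e - ?W (e - 1))"
    by (rule sum_telescope_atLeastAtMost[OF assms, symmetric])
  also have "\<dots> = (\<Sum>e\<in>{a..b}. int (card {i. i < N \<and> s i e}))"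
    by (rule sum.cong[OF refl step])
  also have "\<dots> = (\<Sum>e\<in>{a..b}. \<Sum>i<N. of_bool (s i e))"
    by (simp add: Int_def)
  also have "\<dots> = (\<Sum>i<N. \<Sum>e\<in>{a..b}. of_bool (s i e))"
    by (rule sum.swap)
  also have "\<dots> = (\<Sum>i<N. int (card {e\<in>{a..b}. s i e}))"
    by (intro sum.cong refl) (simp add: Int_def)
  finally show ?thesis .
qed

lemma cumulative_workload_diff_le:
  assumes "1 \<le> a" "a \<le> b + 1" "\<And>i. i < N \<Longrightarrow> card {e\<in>{a..b}. s i e} \<le> k"
  shows "cumulative_workload N s b - cumulative_workload N s (a - 1) \<le> int N * int k"
proof -
  have "(\<Sum>i<N. int (card {e\<in>{a..b}. s i e})) \<le> (\<Sum>i<N. int k)"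
    by (intro sum_mono) (use assms(3) in auto)
  then show ?thesis unfolding cumulative_workload_diff[OF assms(1,2)] by simp
qed

lemma cumulative_workload_diff_ge:
  assumes "1 \<le> a" "a \<le> b + 1" "\<And>i. i < N \<Longrightarrow> k \<le> int (card {e\<in>{a..b}. s i e})"
  shows "int N * k \<le> cumulative_workload N s b - cumulative_workload N s (a - 1)"
proof -
  have "(\<Sum>i<N. k) \<le> (\<Sum>i<N. int (card {e\<in>{a..b}. s i e}))"
    by (intro sum_mono) (use assms(3) in auto)
  then show ?thesis unfolding cumulative_workload_diff[OF assms(1,2)] by simp
qed

lemma feasible_schedule_workload_conditions:
  assumes "feasible_schedule D N 1 uw 1 uo Uw Uo rl ru s"
  shows "workload_conditions D N uw uo Uw Uo rl ru (cumulative_workload N s)"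
proof -
  let ?W = "cumulative_workload N s"
  note feasible = assms[unfolded feasible_schedule_def]
  have work_days_ge: "int D - int Uo \<le> int (card {e\<in>{1..D}. s i e})" if "i < N" for i
  proof -
    have "card {e\<in>{1..D}. \<not> s i e} \<le> Uo" using feasible that by blast
    then show ?thesis using card_filter_not[of "{1..D}" "s i"] by simp
  qed
  have "?W D - ?W 0 \<le> int N * int Uw"
    using cumulative_workload_diff_le[of 1 D N s Uw] feasible by simp
  moreover have "int N * (int D - int Uo) \<le> ?W D - ?W 0"
    using cumulative_workload_diff_ge[of 1 D N _ s] work_days_ge by simp
  moreover have "?W (d + uw) - ?W (d - 1) \<le> int N * int uw" if "1 \<le> d" "d + uw \<le> D" for d
  proof (rule cumulative_workload_diff_le)
    fix i assume "i < N"
    then show "card {e\<in>{d..d + uw}. s i e} \<le> uw"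
      using card_work_days_window_le[of D s i uw d] feasible that by auto
  qed (use that in auto)
  moreover have "int N * 1 \<le> ?W (d + uo) - ?W (d - 1)" if "1 \<le> d" "d + uo \<le> D" for d
  proof (rule cumulative_workload_diff_ge)
    fix i assume "i < N"
    then have "0 < card {e\<in>{d..d + uo}. s i e}"
      using card_work_days_window_pos[of D s i uo d] feasible that by auto
    then show "1 \<le> int (card {e\<in>{d..d + uo}. s i e})" by simp
  qed (use that in auto)
  moreover have "int (rl d) \<le> ?W d - ?W (d - 1) \<and> ?W d - ?W (d - 1) \<le> int (ru d)"
    if "1 \<le> d" "d \<le> D" for d
    using cumulative_workload_step[OF that(1)] feasible that by auto
  ultimately show ?thesis unfolding workload_conditions_def by (simp add: algebra_simps)
qed

definition share :: "nat \<Rightarrow> nat \<Rightarrow> int \<Rightarrow> int" where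
  "share N i x = (x + int i) div int N"

lemma sum_share_add_one:
  assumes "0 < N"
  shows "(\<Sum>i<N. share N i (x + 1)) = (\<Sum>i<N. share N i x) + 1"
proof -
  have "(\<Sum>i<N. share N i (x + 1)) = (\<Sum>i<N. share N (Suc i) x)"
    unfolding share_def by (simp add: algebra_simps)
  moreover have "(\<Sum>i<Suc N. share N i x) = share N 0 x + (\<Sum>i<N. share N (Suc i) x)"
    by (rule sum.lessThan_Suc_shift)
  moreover have "share N N x = share N 0 x + 1"
    unfolding share_def using assms div_add_self2[of "int N" x] by simp
  ultimately show ?thesis by simp
qed

lemma sum_share_eq:
  assumes "0 < N"
  shows "(\<Sum>i<N. share N i x) = x"
proof (induction x rule: int_induct[where k = 0])
  case base
  show ?case unfolding share_def by simp
next
  case (step1 x)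
  then show ?case using sum_share_add_one[OF assms, of x] by simp
next
  case (step2 x)
  then show ?case using sum_share_add_one[OF assms, of "x - 1"] by simp
qed

lemma share_add_mult:
  assumes "0 < N"
  shows "share N i (x + int N * k) = share N i x + k"
proof -
  have "(x + int i + k * int N) div int N = (x + int i) div int N + k"
    using assms by simp
  then show ?thesis unfolding share_def by (simp add: algebra_simps)
qed

lemma share_mono:
  assumes "0 < N" "x \<le> y"
  shows "share N i x \<le> share N i y"
  unfolding share_def using assms by (simp add: zdiv_mono1)

definition rounding_schedule :: "nat \<Rightarrow> (nat \<Rightarrow> int) \<Rightarrow> schedule" where
  "rounding_schedule N W i d \<longleftrightarrow> share N i (W (d - 1)) < share N i (W d)"

locale workload_profile =
  fixes N D :: nat and W :: "nat \<Rightarrow> int"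
  assumes N_pos: "0 < N"
    and W_step: "\<And>d. 1 \<le> d \<Longrightarrow> d \<le> D \<Longrightarrow> W (d - 1) \<le> W d \<and> W d \<le> W (d - 1) + int N"
begin

lemma rounding_schedule_indicator:
  assumes "1 \<le> d" "d \<le> D"
  shows "of_bool (rounding_schedule N W i d) = share N i (W d) - share N i (W (d - 1))"
proof -
  have "share N i (W (d - 1)) \<le> share N i (W d)"
    using share_mono[OF N_pos] W_step[OF assms] by blast
  moreover have "share N i (W d) \<le> share N i (W (d - 1) + int N * 1)"
    using share_mono[OF N_pos] W_step[OF assms] by simp
  ultimately show ?thesis
    unfolding rounding_schedule_def share_add_mult[OF N_pos] by auto
qed

lemma card_rounding_schedule_workers:
  assumes "1 \<le> d" "d \<le> D"
  shows "int (card {i. i < N \<and> rounding_schedule N W i d}) = W d - W (d - 1)"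
proof -
  have "int (card {i. i < N \<and> rounding_schedule N W i d}) =
      (\<Sum>i<N. of_bool (rounding_schedule N W i d))"
    by (simp add: Int_def)
  also have "\<dots> = (\<Sum>i<N. share N i (W d) - share N i (W (d - 1)))"
    using rounding_schedule_indicator[OF assms] by simp
  also have "\<dots> = W d - W (d - 1)"
    by (simp add: sum_subtractf sum_share_eq[OF N_pos])
  finally show ?thesis .
qed

lemma card_rounding_schedule_days:
  assumes "1 \<le> a" "a \<le> b + 1" "b \<le> D"
  shows "int (card {e\<in>{a..b}. rounding_schedule N W i e}) = share N i (W b) - share N i (W (a - 1))"
proof -
  have "int (card {e\<in>{a..b}. rounding_schedule N W i e}) =
      (\<Sum>e\<in>{a..b}. of_bool (rounding_schedule N W i e))"
    by (simp add: Int_def)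
  also have "\<dots> = (\<Sum>e\<in>{a..b}. share N i (W e) - share N i (W (e - 1)))"
    using assms by (intro sum.cong refl rounding_schedule_indicator) auto
  also have "\<dots> = share N i (W b) - share N i (W (a - 1))"
    by (rule sum_telescope_atLeastAtMost[OF assms(1,2)])
  finally show ?thesis .
qed

lemma card_rounding_schedule_days_le:
  assumes "1 \<le> a" "a \<le> b + 1" "b \<le> D" "W b \<le> W (a - 1) + int N * k"
  shows "int (card {e\<in>{a..b}. rounding_schedule N W i e}) \<le> k"
  using card_rounding_schedule_days[OF assms(1-3), of i] share_mono[OF N_pos assms(4), of i]
  by (simp add: share_add_mult[OF N_pos])

lemma card_rounding_schedule_days_ge:
  assumes "1 \<le> a" "a \<le> b + 1" "b \<le> D" "W (a - 1) + int N * k \<le> W b"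
  shows "k \<le> int (card {e\<in>{a..b}. rounding_schedule N W i e})"
  using card_rounding_schedule_days[OF assms(1-3), of i] share_mono[OF N_pos assms(4), of i]
  by (simp add: share_add_mult[OF N_pos])

lemma rounding_schedule_work_period_le:
  assumes windows: "\<forall>d. 1 \<le> d \<and> d + uw \<le> D \<longrightarrow> W (d + uw) - W (d - 1) \<le> int N * int uw"
    and period: "is_period D (rounding_schedule N W) i True a b"
  shows "b + 1 - a \<le> uw"
proof (rule ccontr)
  assume "\<not> ?thesis"
  then have window: "1 \<le> a" "a + uw \<le> b" "b \<le> D"
    and "\<forall>e\<in>{a..a + uw}. rounding_schedule N W i e"
    using period unfolding is_period_def by auto
  then have "{e\<in>{a..a + uw}. rounding_schedule N W i e} = {a..a + uw}" by auto
  moreover have "int (card {e\<in>{a..a + uw}. rounding_schedule N W i e}) \<le> int uw"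
    using card_rounding_schedule_days_le[of a "a + uw" "int uw" i] windows window by auto
  ultimately show False by simp
qed

lemma rounding_schedule_off_period_le:
  assumes windows: "\<forall>d. 1 \<le> d \<and> d + uo \<le> D \<longrightarrow> int N \<le> W (d + uo) - W (d - 1)"
    and period: "is_period D (rounding_schedule N W) i False a b"
  shows "b + 1 - a \<le> uo"
proof (rule ccontr)
  assume "\<not> ?thesis"
  then have window: "1 \<le> a" "a + uo \<le> b" "b \<le> D"
    and "\<forall>e\<in>{a..a + uo}. \<not> rounding_schedule N W i e"
    using period unfolding is_period_def by auto
  then have "{e\<in>{a..a + uo}. rounding_schedule N W i e} = {}" by auto
  moreover have "1 \<le> int (card {e\<in>{a..a + uo}. rounding_schedule N W i e})"
    using card_rounding_schedule_days_ge[of a "a + uo" 1 i] windows window by auto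
  ultimately show False by (simp only: card.empty)
qed

end

lemma workload_conditions_feasible_schedule:
  assumes N_pos: "0 < N" and ru_le: "\<forall>d\<in>{1..D}. ru d \<le> N"
    and conditions: "workload_conditions D N uw uo Uw Uo rl ru W"
  shows "feasible_schedule D N 1 uw 1 uo Uw Uo rl ru (rounding_schedule N W)"
proof -
  let ?s = "rounding_schedule N W"
  note cond = conditions[unfolded workload_conditions_def]
  have daily: "int (rl d) \<le> W d - W (d - 1) \<and> W d - W (d - 1) \<le> int (ru d)"
    if "1 \<le> d" "d \<le> D" for d
    using cond that by blast
  have W_step: "W (d - 1) \<le> W d \<and> W d \<le> W (d - 1) + int N" if "1 \<le> d" "d \<le> D" for d
  proof -
    have "int (ru d) \<le> int N" using ru_le that by simp
    then show ?thesis using daily[OF that] by linarith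
  qed
  interpret workload_profile N D W
    using N_pos W_step by unfold_locales
  have coverage: "rl d \<le> card {i. i < N \<and> ?s i d} \<and> card {i. i < N \<and> ?s i d} \<le> ru d"
    if "d \<in> {1..D}" for d
    using card_rounding_schedule_workers[of d] daily[of d] that by auto
  have work_periods: "1 \<le> b + 1 - a \<and> b + 1 - a \<le> uw" if "is_period D ?s i True a b" for i a b
  proof -
    have "b + 1 - a \<le> uw"
      using rounding_schedule_work_period_le[OF _ that] cond by blast
    moreover have "a \<le> b" using that unfolding is_period_def by blast
    ultimately show ?thesis by simp
  qed
  have off_periods: "1 \<le> b + 1 - a \<and> b + 1 - a \<le> uo" if "is_period D ?s i False a b" for i a b
  proof -
    have "b + 1 - a \<le> uo"
      using rounding_schedule_off_period_le[OF _ that] cond by blast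
    moreover have "a \<le> b" using that unfolding is_period_def by blast
    ultimately show ?thesis by simp
  qed
  have work_days: "card {d\<in>{1..D}. ?s i d} \<le> Uw" for i
    using card_rounding_schedule_days_le[of 1 D "int Uw" i] cond by simp
  have off_days: "card {d\<in>{1..D}. \<not> ?s i d} \<le> Uo" for i
  proof -
    have "int D - int Uo \<le> int (card {d\<in>{1..D}. ?s i d})"
      using card_rounding_schedule_days_ge[of 1 D "int D - int Uo" i] cond
      by (simp add: algebra_simps)
    then show ?thesis using card_filter_not[of "{1..D}" "?s i"] by simp
  qed
  show ?thesis unfolding feasible_schedule_def
    using coverage work_periods off_periods work_days off_days by blast
qed

theorem corollary4p8:
  fixes D N uw uo Uw Uo :: nat and rl ru :: "nat \<Rightarrow> nat"
  assumes "D \<ge> 1" and "N \<ge> 1"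
    and "\<forall>d\<in>{1..D}. rl d \<le> ru d \<and> ru d \<le> N"
  shows "dodosp_feasible D N 1 uw 1 uo Uw Uo rl ru \<longleftrightarrow>
    (\<exists>W :: nat \<Rightarrow> int.
       W D - W 0 \<le> int N * int Uw \<and>
       int N * int D + W 0 - W D \<le> int N * int Uo \<and>
       (\<forall>d. 1 \<le> d \<and> d + uw \<le> D \<longrightarrow> W (d + uw) - W (d - 1) \<le> int N * int uw) \<and>
       (\<forall>d. 1 \<le> d \<and> d + uo \<le> D \<longrightarrow> int N \<le> W (d + uo) - W (d - 1)) \<and>
       (\<forall>d. 1 \<le> d \<and> d \<le> D \<longrightarrow> int (rl d) \<le> W d - W (d - 1) \<and> W d - W (d - 1) \<le> int (ru d)))"
proof -
  have "0 < N" "\<forall>d\<in>{1..D}. ru d \<le> N" using assms(2,3) by auto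
  then have "dodosp_feasible D N 1 uw 1 uo Uw Uo rl ru \<longleftrightarrow>
      (\<exists>W. workload_conditions D N uw uo Uw Uo rl ru W)"
    unfolding dodosp_feasible_def
    using feasible_schedule_workload_conditions workload_conditions_feasible_schedule by blast
  then show ?thesis unfolding workload_conditions_def .
qed

end
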